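(* Let $N\ge1$ and let $\mathbf s$ be the algebra anti-automorphism of $\mathcal H^N$ determined by $\mathbf s(Y_u^i)=Y_{u^*}^i$. Then $m^{op}=\mathbf s\circ m\circ(\mathbf s\otimes\mathbf s)$, $\Delta=(\mathbf s\otimes\mathbf s)\circ\Delta\circ\mathbf s$, and $S_{\mathcal L}=\mathbf s\,S_{\mathcal H}\,\mathbf s$.
   Context: Let $\langle N\rangle=\{1,\dots,N\}$; for a word $u=u(1)\cdots u(p)$ let $|u|=p$ and $u^*=u(p)\cdots u(1)$. $\mathcal H=\mathcal H^N$ is, as an algebra (multiplication $m$), the free unital associative complex algebra on generators $Y_u^i$ ($i\in\langle N\rangle$, $|u|\ge2$); set $Y_j^i=\delta_{ij}1$ for letters. Counit: the algebra homomorphism $\varepsilon$ with $\varepsilon(Y_u^i)=0$. Comultiplication: the algebra homomorphism $\Delta$ with $\Delta(Y_u^i)=\sum_{q=1}^{p}\sum_{(C_1,\dots,C_q)}\sum_{v\in\langle N\rangle^q} Y_{u|C_1}^{v(1)}\cdots Y_{u|C_q}^{v(q)}\otimes Y_v^i$ ($p=|u|$, the middle sum over all partitions of $\{1,\dots,p\}$ into nonempty consecutive intervals $C_1<\dots<C_q$, $u|C_k$ the subword indexed by $C_k$). $S_{\mathcal H}$ is its (invertible) antipode. $m^{op}=m\circ\tau$, $\tau$ the flip. The anti-automorphism $\mathbf s$ acts by $\mathbf s(Y_{u_1}^{i_1}\cdots Y_{u_n}^{i_n})=Y_{u_n^*}^{i_n}\cdots Y_{u_1^*}^{i_1}$. $S_{\mathcal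 L}=S_{\mathcal H}^{-1}$ is the antipode of the left Lagrange Hopf algebra $(\mathcal H,m,\tau\circ\Delta,\varepsilon)$. *)

theory Defs
  imports Complex_Main "HOL-Library.Poly_Mapping"
begin

(* Generators Y_u^i are encoded as pairs (i, u); a monomial Y_{u_1}^{i_1}...Y_{u_n}^{i_n}
   is the list [(i_1,u_1),...,(i_n,u_n)] (empty list = unit 1).  The free algebra H^N is
   the space of finitely supported complex-valued functions on monomials over valid
   generators; H \<otimes> H is the space of finitely supported functions on pairs of
   monomials (the tensor product of the monomial bases). *)

type_synonym gen = "nat \<times> nat list"
type_synonym mono = "gen list"
type_synonym H = "mono \<Rightarrow>\<^sub>0 complex"
type_synonym HH = "(mono \<times> mono) \<Rightarrow>\<^sub>0 complex"

definition valid_gen :: "nat \<Rightarrow> gen \<Rightarrow> bool" where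
  "valid_gen N g \<longleftrightarrow> fst g \<in> {1..N} \<and> set (snd g) \<subseteq> {1..N} \<and> length (snd g) \<ge> 2"

definition Hcar :: "nat \<Rightarrow> H set" where
  "Hcar N = {x. \<forall>mo\<in>Poly_Mapping.keys x. \<forall>g\<in>set mo. valid_gen N g}"

definition HHcar :: "nat \<Rightarrow> HH set" where
  "HHcar N = {t. \<forall>p\<in>Poly_Mapping.keys t. \<forall>g\<in>set (fst p) \<union> set (snd p). valid_gen N g}"

definition smul :: "complex \<Rightarrow> ('a \<Rightarrow>\<^sub>0 complex) \<Rightarrow> ('a \<Rightarrow>\<^sub>0 complex)" where
  "smul c x = Poly_Mapping.map (\<lambda>a. c * a) x"

definition lin :: "('a \<Rightarrow> ('b \<Rightarrow>\<^sub>0 complex)) \<Rightarrow> ('a \<Rightarrow>\<^sub>0 complex) \<Rightarrow> ('b \<Rightarrow>\<^sub>0 complex)" where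
  "lin f x = (\<Sum>a\<in>Poly_Mapping.keys x. smul (Poly_Mapping.lookup x a) (f a))"

definition basis :: "'a \<Rightarrow> ('a \<Rightarrow>\<^sub>0 complex)" where
  "basis a = Poly_Mapping.single a 1"

definition Hone :: H where "Hone = basis []"
definition HHone :: HH where "HHone = basis ([], [])"

definition Hmul :: "H \<Rightarrow> H \<Rightarrow> H" where
  "Hmul x y = lin (\<lambda>a. lin (\<lambda>b. basis (a @ b)) y) x"

definition tens :: "H \<Rightarrow> H \<Rightarrow> HH" where
  "tens x y = lin (\<lambda>a. lin (\<lambda>b. basis (a, b)) y) x"

definition HHmul :: "HH \<Rightarrow> HH \<Rightarrow> HH" where
  "HHmul s t = lin (\<lambda>(a, b). lin (\<lambda>(c, d). basis (a @ c, b @ d)) t) s"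

definition mH :: "HH \<Rightarrow> H" where
  "mH = lin (\<lambda>(a, b). basis (a @ b))"

definition flip :: "HH \<Rightarrow> HH" where
  "flip = lin (\<lambda>(a, b). basis (b, a))"

definition mop :: "HH \<Rightarrow> H" where
  "mop t = mH (flip t)"

definition tensmap :: "(H \<Rightarrow> H) \<Rightarrow> (H \<Rightarrow> H) \<Rightarrow> HH \<Rightarrow> HH" where
  "tensmap f g = lin (\<lambda>(a, b). tens (f (basis a)) (g (basis b)))"

definition s_mono :: "mono \<Rightarrow> mono" where
  "s_mono mo = rev (map (\<lambda>(i, u). (i, rev u)) mo)"

definition sH :: "H \<Rightarrow> H" where
  "sH = lin (\<lambda>mo. basis (s_mono mo))"

(* counit: algebra homomorphism with \<epsilon>(Y_u^i) = 0 *)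
definition epsH :: "H \<Rightarrow> complex" where
  "epsH x = Poly_Mapping.lookup x []"

(* Y_w^i for an arbitrary nonempty word w, with Y_j^i = \<delta>_{ij} 1 for letters *)
definition Y :: "nat \<Rightarrow> nat list \<Rightarrow> H" where
  "Y i w = (if length w \<ge> 2 then basis [(i, w)]
            else if w = [i] then Hone else 0)"

(* partitions of {1..p} into consecutive nonempty intervals C_1 < ... < C_q,
   encoded as the list of subwords u|C_1, ..., u|C_q *)
definition interval_splits :: "nat list \<Rightarrow> nat list list set" where
  "interval_splits u = {ws. concat ws = u \<and> (\<forall>w\<in>set ws. w \<noteq> [])}"

definition words :: "nat \<Rightarrow> nat \<Rightarrow> nat list set" where
  "words N q = {v. length v = q \<and> set v \<subseteq> {1..N}}"

definition Hprod :: "H list \<Rightarrow> H" where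
  "Hprod xs = foldr Hmul xs Hone"

definition Delta_gen :: "nat \<Rightarrow> gen \<Rightarrow> HH" where
  "Delta_gen N g = (case g of (i, u) \<Rightarrow>
     (\<Sum>ws\<in>interval_splits u. \<Sum>v\<in>words N (length ws).
        tens (Hprod (map (\<lambda>k. Y (v ! k) (ws ! k)) [0..<length ws])) (Y i v)))"

definition Delta :: "nat \<Rightarrow> H \<Rightarrow> HH" where
  "Delta N = lin (\<lambda>mo. foldr HHmul (map (Delta_gen N) mo) HHone)"

definition is_antipode :: "nat \<Rightarrow> (H \<Rightarrow> H) \<Rightarrow> bool" where
  "is_antipode N S \<longleftrightarrow>
     (\<forall>x\<in>Hcar N. S x \<in> Hcar N) \<and>
     (\<forall>x\<in>Hcar N. \<forall>y\<in>Hcar N. \<forall>c. S (x + y) = S x + S y \<and> S (smul c x) = smul c (S x)) \<and>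
     (\<forall>x\<in>Hcar N. mH (tensmap S id (Delta N x)) = smul (epsH x) Hone) \<and>
     (\<forall>x\<in>Hcar N. mH (tensmap id S (Delta N x)) = smul (epsH x) Hone)"

end

theory Submission
  imports Defs
begin

text \<open>Both sides of the first two identities are linear, so it suffices to compare them on basis
  monomials; for the coproduct, (s \<otimes> s) \<circ> \<Delta> \<circ> s is again an algebra homomorphism and agrees with
  \<Delta> on the generators.

  For the antipode no coassociativity is needed. The coproduct is triangular: \<Delta>(w) = w \<otimes> 1 plus
  terms whose left factor has smaller degree, so by induction on the degree a family F(w) is
  determined by the sums \<Sigma> F(w') \<Phi>(w'') over \<Delta>(w) = \<Sigma> w' \<otimes> w''. On H \<otimes> H this shows that S_H is an
  anti-homomorphism. Then the left antipode identity, transported by s, shows that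
  F = S_H s S_H s and F = id produce the same sums for \<Phi> = S_H, namely those of the right antipode
  identity. Hence S_H (s S_H s) = id, and s S_H s is the inverse S_L of S_H.\<close>

abbreviation lookup :: "('a \<Rightarrow>\<^sub>0 complex) \<Rightarrow> 'a \<Rightarrow> complex" where
  "lookup \<equiv> Poly_Mapping.lookup"
abbreviation keys :: "('a \<Rightarrow>\<^sub>0 complex) \<Rightarrow> 'a set" where
  "keys \<equiv> Poly_Mapping.keys"

section \<open>Linear maps between spaces of finitely supported functions\<close>

lemma lookup_smul [simp]: "lookup (smul c x) a = c * lookup x a"
  unfolding smul_def by transfer (simp add: when_def)

lemma lookup_basis: "lookup (basis a) b = (if a = b then 1 else 0)"
  by (simp add: basis_def lookup_single when_def)

lemma keys_basis [simp]: "keys (basis a) = {a}"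
  by (simp add: basis_def)

lemma keys_smul: "keys (smul c x) \<subseteq> keys x"
  by (auto simp: in_keys_iff)

lemma smul_zero_left [simp]: "smul 0 x = 0"
  by (rule poly_mapping_eqI) simp

lemma smul_zero_right [simp]: "smul c 0 = 0"
  by (rule poly_mapping_eqI) simp

lemma smul_one [simp]: "smul 1 x = x"
  by (rule poly_mapping_eqI) simp

lemma smul_smul [simp]: "smul c (smul d x) = smul (c * d) x"
  by (rule poly_mapping_eqI) simp

lemma smul_add_left: "smul (c + d) x = smul c x + smul d x"
  by (rule poly_mapping_eqI) (simp add: lookup_add algebra_simps)

lemma smul_add_right: "smul c (x + y) = smul c x + smul c y"
  by (rule poly_mapping_eqI) (simp add: lookup_add algebra_simps)

lemma smul_sum: "smul c (sum f A) = (\<Sum>a\<in>A. smul c (f a))"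
  by (rule poly_mapping_eqI) (simp add: lookup_sum sum_distrib_left)

lemma lin_superset:
  assumes "finite A" "keys x \<subseteq> A"
  shows "lin f x = (\<Sum>a\<in>A. smul (lookup x a) (f a))"
  unfolding lin_def
  by (rule sum.mono_neutral_left) (use assms in \<open>auto simp: in_keys_iff\<close>)

lemma lin_add: "lin f (x + y) = lin f x + lin f y"
proof -
  let ?A = "keys x \<union> keys y"
  have "lin f (x + y) = (\<Sum>a\<in>?A. smul (lookup (x + y) a) (f a))"
    by (rule lin_superset) (auto dest: subsetD[OF keys_add])
  also have "\<dots> = (\<Sum>a\<in>?A. smul (lookup x a) (f a)) + (\<Sum>a\<in>?A. smul (lookup y a) (f a))"
    by (simp add: lookup_add smul_add_left sum.distrib)
  also have "\<dots> = lin f x + lin f y"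
    by (subst (1 2) lin_superset[of ?A]) auto
  finally show ?thesis .
qed

lemma lin_smul: "lin f (smul c x) = smul c (lin f x)"
proof -
  have "lin f (smul c x) = (\<Sum>a\<in>keys x. smul (lookup (smul c x) a) (f a))"
    by (rule lin_superset) (auto dest: subsetD[OF keys_smul])
  thus ?thesis by (simp add: lin_def smul_sum)
qed

lemma lin_basis [simp]: "lin f (basis a) = f a"
  by (simp add: lin_def lookup_basis)

lemma lin_cong: "(\<And>a. a \<in> keys x \<Longrightarrow> f a = g a) \<Longrightarrow> lin f x = lin g x"
  unfolding lin_def by (rule sum.cong) auto

lemma lin_fun_smul: "lin (\<lambda>a. smul c (f a)) x = smul c (lin f x)"
  by (simp add: lin_def smul_sum mult.commute)

lemma lin_swap: "lin (\<lambda>a. lin (\<lambda>b. F a b) y) x = lin (\<lambda>b. lin (\<lambda>a. F a b) x) y"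
  unfolding lin_def smul_sum by (subst sum.swap) (simp add: mult.commute)

lemma lin_basis_id [simp]: "lin basis x = x"
proof (rule poly_mapping_eqI)
  fix k
  have "lookup (lin basis x) k = (\<Sum>a\<in>keys x. if a = k then lookup x a else 0)"
    unfolding lin_def lookup_sum by (intro sum.cong) (auto simp: lookup_basis)
  also have "\<dots> = lookup x k"
    by (simp add: sum.delta' in_keys_iff)
  finally show "lookup (lin basis x) k = lookup x k" .
qed

lemma keys_lin: "keys (lin f x) \<subseteq> (\<Union>a\<in>keys x. keys (f a))"
proof
  fix c assume c: "c \<in> keys (lin f x)"
  show "c \<in> (\<Union>a\<in>keys x. keys (f a))"
  proof (rule ccontr)
    assume "c \<notin> (\<Union>a\<in>keys x. keys (f a))"
    hence "lookup (lin f x) c = 0"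
      by (auto simp: lin_def lookup_sum in_keys_iff intro!: sum.neutral)
    with c show False by (simp add: in_keys_iff)
  qed
qed

definition linear_pm :: "(('a \<Rightarrow>\<^sub>0 complex) \<Rightarrow> ('b \<Rightarrow>\<^sub>0 complex)) \<Rightarrow> bool" where
  "linear_pm L \<longleftrightarrow> (\<forall>x y. L (x + y) = L x + L y) \<and> (\<forall>c x. L (smul c x) = smul c (L x))"

lemma linear_pm_lin [simp]: "linear_pm (lin f)"
  by (simp add: linear_pm_def lin_add lin_smul)

lemma linear_pm_id: "linear_pm (\<lambda>x. x)"
  by (simp add: linear_pm_def)

lemma linear_pm_compose: "linear_pm L \<Longrightarrow> linear_pm M \<Longrightarrow> linear_pm (\<lambda>x. L (M x))"
  by (simp add: linear_pm_def)

lemma linear_pm_add: "linear_pm L \<Longrightarrow> L (x + y) = L x + L y"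
  unfolding linear_pm_def by blast

lemma linear_pm_smul: "linear_pm L \<Longrightarrow> L (smul c x) = smul c (L x)"
  unfolding linear_pm_def by blast

lemma linear_pm_zero: "linear_pm L \<Longrightarrow> L 0 = 0"
  using linear_pm_smul[of L 0 0] by simp

lemma linear_pm_sum: "linear_pm L \<Longrightarrow> L (sum f A) = (\<Sum>a\<in>A. L (f a))"
  by (induction A rule: infinite_finite_induct) (auto simp: linear_pm_zero linear_pm_add)

lemma linear_pm_commute_lin: "linear_pm L \<Longrightarrow> L (lin f x) = lin (\<lambda>a. L (f a)) x"
  unfolding lin_def by (simp add: linear_pm_sum linear_pm_smul)

lemma lin_lin: "lin g (lin f x) = lin (\<lambda>a. lin g (f a)) x"
  by (rule linear_pm_commute_lin) simp

lemma linear_pm_eq_lin: "linear_pm L \<Longrightarrow> L x = lin (\<lambda>a. L (basis a)) x"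
  using linear_pm_commute_lin[of L basis x] by simp

lemma linear_pm_eqI:
  assumes "linear_pm L" "linear_pm M" "\<And>a. a \<in> keys x \<Longrightarrow> L (basis a) = M (basis a)"
  shows "L x = M x"
  using assms(3) by (simp add: linear_pm_eq_lin[OF assms(1), of x] linear_pm_eq_lin[OF assms(2), of x]
      cong: lin_cong)

lemma linear_pm_fun_lin: "(\<And>a. linear_pm (\<lambda>x. G x a)) \<Longrightarrow> linear_pm (\<lambda>x. lin (G x) y)"
  unfolding linear_pm_def lin_def by (simp add: smul_add_right sum.distrib smul_sum mult.commute)

definition bilinear_pm ::
    "(('a \<Rightarrow>\<^sub>0 complex) \<Rightarrow> ('b \<Rightarrow>\<^sub>0 complex) \<Rightarrow> ('c \<Rightarrow>\<^sub>0 complex)) \<Rightarrow> bool" where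
  "bilinear_pm F \<longleftrightarrow> (\<forall>y. linear_pm (\<lambda>x. F x y)) \<and> (\<forall>x. linear_pm (F x))"

lemma bilinear_pm_linear_left: "bilinear_pm F \<Longrightarrow> linear_pm (\<lambda>x. F x y)"
  unfolding bilinear_pm_def by blast

lemma bilinear_pm_linear_right: "bilinear_pm F \<Longrightarrow> linear_pm (F x)"
  unfolding bilinear_pm_def by blast

lemma bilinear_pm_compose:
  "bilinear_pm F \<Longrightarrow> linear_pm L \<Longrightarrow> linear_pm M1 \<Longrightarrow> linear_pm M2 \<Longrightarrow>
    bilinear_pm (\<lambda>x y. L (F (M1 x) (M2 y)))"
  unfolding bilinear_pm_def linear_pm_def by simp

lemma bilinear_pm_swap: "bilinear_pm F \<Longrightarrow> bilinear_pm (\<lambda>x y. F y x)"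
  unfolding bilinear_pm_def by blast

lemma bilinear_pm_eqI:
  assumes F: "bilinear_pm F" and G: "bilinear_pm G"
    and "\<And>a b. a \<in> keys x \<Longrightarrow> b \<in> keys y \<Longrightarrow> F (basis a) (basis b) = G (basis a) (basis b)"
  shows "F x y = G x y"
proof (rule linear_pm_eqI[OF bilinear_pm_linear_left[OF F] bilinear_pm_linear_left[OF G]])
  fix a assume a: "a \<in> keys x"
  show "F (basis a) y = G (basis a) y"
    by (rule linear_pm_eqI[OF bilinear_pm_linear_right[OF F] bilinear_pm_linear_right[OF G]])
       (rule assms(3)[OF a])
qed

definition bilin_ext ::
    "('a \<Rightarrow> 'b \<Rightarrow> 'c) \<Rightarrow> ('a \<Rightarrow>\<^sub>0 complex) \<Rightarrow> ('b \<Rightarrow>\<^sub>0 complex) \<Rightarrow> ('c \<Rightarrow>\<^sub>0 complex)" where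
  "bilin_ext \<phi> x y = lin (\<lambda>a. lin (\<lambda>b. basis (\<phi> a b)) y) x"

lemma bilin_ext_basis [simp]: "bilin_ext \<phi> (basis a) (basis b) = basis (\<phi> a b)"
  by (simp add: bilin_ext_def)

lemma bilinear_pm_bilin_ext: "bilinear_pm (bilin_ext \<phi>)"
  unfolding bilinear_pm_def bilin_ext_def by (auto intro: linear_pm_fun_lin)

lemma bilin_ext_add_left: "bilin_ext \<phi> (x + y) z = bilin_ext \<phi> x z + bilin_ext \<phi> y z"
  by (rule linear_pm_add[OF bilinear_pm_linear_left[OF bilinear_pm_bilin_ext]])

lemma bilin_ext_add_right: "bilin_ext \<phi> x (y + z) = bilin_ext \<phi> x y + bilin_ext \<phi> x z"
  by (rule linear_pm_add[OF bilinear_pm_linear_right[OF bilinear_pm_bilin_ext]])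

lemma lin_bilin_ext: "lin f (bilin_ext \<phi> x y) = lin (\<lambda>a. lin (\<lambda>b. f (\<phi> a b)) y) x"
  by (simp add: bilin_ext_def lin_lin)

lemma keys_bilin_ext: "keys (bilin_ext \<phi> x y) \<subseteq> {\<phi> a b |a b. a \<in> keys x \<and> b \<in> keys y}"
proof
  fix c assume "c \<in> keys (bilin_ext \<phi> x y)"
  then have "c \<in> (\<Union>a\<in>keys x. keys (lin (\<lambda>b. basis (\<phi> a b)) y))"
    unfolding bilin_ext_def by (rule subsetD[OF keys_lin])
  then obtain a where a: "a \<in> keys x" and c: "c \<in> keys (lin (\<lambda>b. basis (\<phi> a b)) y)"
    by blast
  from c have "c \<in> (\<Union>b\<in>keys y. keys (basis (\<phi> a b)))"
    by (rule subsetD[OF keys_lin])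
  with a show "c \<in> {\<phi> a b |a b. a \<in> keys x \<and> b \<in> keys y}" by auto
qed

lemma bilin_ext_assoc:
  assumes "\<And>a b c. \<phi> (\<phi> a b) c = \<phi> a (\<phi> b c)"
  shows "bilin_ext \<phi> (bilin_ext \<phi> x y) z = bilin_ext \<phi> x (bilin_ext \<phi> y z)"
proof -
  have B: "bilinear_pm (bilin_ext \<phi>)" by (rule bilinear_pm_bilin_ext)
  have l: "linear_pm (\<lambda>x. bilin_ext \<phi> x y)" and r: "linear_pm (bilin_ext \<phi> x)" for x y
    using B by (simp_all add: bilinear_pm_linear_left bilinear_pm_linear_right)
  have basis_case: "bilin_ext \<phi> (bilin_ext \<phi> (basis a) (basis b)) z
      = bilin_ext \<phi> (basis a) (bilin_ext \<phi> (basis b) z)" for a b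
    by (rule linear_pm_eqI[OF r linear_pm_compose[OF r r]]) (simp add: assms)
  have L: "bilinear_pm (\<lambda>x y. bilin_ext \<phi> (bilin_ext \<phi> x y) z)"
    using l by (simp add: bilinear_pm_def linear_pm_compose[OF l] r linear_pm_compose[OF l r])
  have R: "bilinear_pm (\<lambda>x y. bilin_ext \<phi> x (bilin_ext \<phi> y z))"
    by (simp add: bilinear_pm_def l linear_pm_compose[OF r l])
  show ?thesis
    by (rule bilinear_pm_eqI[OF L R basis_case])
qed

section \<open>The product, the flip and the anti-automorphism\<close>

definition pair_append :: "mono \<times> mono \<Rightarrow> mono \<times> mono \<Rightarrow> mono \<times> mono" where
  "pair_append p q = (fst p @ fst q, snd p @ snd q)"

lemma Hmul_eq_bilin_ext: "Hmul = bilin_ext (@)"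
  by (simp add: fun_eq_iff Hmul_def bilin_ext_def)

lemma tens_eq_bilin_ext: "tens = bilin_ext Pair"
  by (simp add: fun_eq_iff tens_def bilin_ext_def)

lemma HHmul_eq_bilin_ext: "HHmul = bilin_ext pair_append"
  unfolding fun_eq_iff HHmul_def bilin_ext_def
  by (auto simp: pair_append_def split: prod.splits intro!: lin_cong)

lemma bilinear_pm_Hmul: "bilinear_pm Hmul"
  by (simp add: Hmul_eq_bilin_ext bilinear_pm_bilin_ext)

lemma bilinear_pm_tens: "bilinear_pm tens"
  by (simp add: tens_eq_bilin_ext bilinear_pm_bilin_ext)

lemma bilinear_pm_HHmul: "bilinear_pm HHmul"
  by (simp add: HHmul_eq_bilin_ext bilinear_pm_bilin_ext)

lemma Hmul_basis [simp]: "Hmul (basis a) (basis b) = basis (a @ b)"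
  by (simp add: Hmul_eq_bilin_ext)

lemma tens_basis [simp]: "tens (basis a) (basis b) = basis (a, b)"
  by (simp add: tens_eq_bilin_ext)

lemma HHmul_basis [simp]: "HHmul (basis p) (basis q) = basis (pair_append p q)"
  by (simp add: HHmul_eq_bilin_ext)

lemma Hmul_assoc: "Hmul (Hmul x y) z = Hmul x (Hmul y z)"
  unfolding Hmul_eq_bilin_ext by (rule bilin_ext_assoc) simp

lemma HHmul_assoc: "HHmul (HHmul x y) z = HHmul x (HHmul y z)"
  unfolding HHmul_eq_bilin_ext by (rule bilin_ext_assoc) (simp add: pair_append_def)

lemma Hmul_smul_left: "Hmul (smul c x) y = smul c (Hmul x y)"
  by (rule linear_pm_smul[OF bilinear_pm_linear_left[OF bilinear_pm_Hmul]])

lemma Hmul_smul_right: "Hmul x (smul c y) = smul c (Hmul x y)"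
  by (rule linear_pm_smul[OF bilinear_pm_linear_right[OF bilinear_pm_Hmul]])

lemma HHmul_add_left: "HHmul (x + y) z = HHmul x z + HHmul y z"
  by (rule linear_pm_add[OF bilinear_pm_linear_left[OF bilinear_pm_HHmul]])

lemma HHmul_add_right: "HHmul x (y + z) = HHmul x y + HHmul x z"
  by (rule linear_pm_add[OF bilinear_pm_linear_right[OF bilinear_pm_HHmul]])

lemma Hmul_one_left [simp]: "Hmul Hone x = x"
  by (rule linear_pm_eqI[OF bilinear_pm_linear_right[OF bilinear_pm_Hmul] linear_pm_id])
     (simp add: Hone_def)

lemma Hmul_one_right [simp]: "Hmul x Hone = x"
  by (rule linear_pm_eqI[OF bilinear_pm_linear_left[OF bilinear_pm_Hmul] linear_pm_id])
     (simp add: Hone_def)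

lemma HHmul_one_left [simp]: "HHmul HHone x = x"
  by (rule linear_pm_eqI[OF bilinear_pm_linear_right[OF bilinear_pm_HHmul] linear_pm_id])
     (simp add: HHone_def pair_append_def)

lemma HHmul_one_right [simp]: "HHmul x HHone = x"
  by (rule linear_pm_eqI[OF bilinear_pm_linear_left[OF bilinear_pm_HHmul] linear_pm_id])
     (simp add: HHone_def pair_append_def)

lemma linear_pm_mH: "linear_pm mH"
  by (simp add: mH_def)

lemma linear_pm_flip: "linear_pm flip"
  by (simp add: flip_def)

lemma linear_pm_tensmap: "linear_pm (tensmap f g)"
  by (simp add: tensmap_def)

lemma linear_pm_sH: "linear_pm sH"
  by (simp add: sH_def)

lemma mH_basis [simp]: "mH (basis (a, b)) = basis (a @ b)"
  by (simp add: mH_def)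

lemma flip_basis [simp]: "flip (basis (a, b)) = basis (b, a)"
  by (simp add: flip_def)

lemma tensmap_basis [simp]: "tensmap f g (basis (a, b)) = tens (f (basis a)) (g (basis b))"
  by (simp add: tensmap_def)

lemma sH_basis [simp]: "sH (basis mo) = basis (s_mono mo)"
  by (simp add: sH_def)

lemma s_mono_Nil [simp]: "s_mono [] = []"
  by (simp add: s_mono_def)

lemma s_mono_Cons: "s_mono ((i, u) # mo) = s_mono mo @ [(i, rev u)]"
  by (simp add: s_mono_def)

lemma s_mono_append [simp]: "s_mono (a @ b) = s_mono b @ s_mono a"
  by (simp add: s_mono_def)

lemma s_mono_s_mono [simp]: "s_mono (s_mono mo) = mo"
  by (induction mo) (auto simp: s_mono_def)

lemma s_mono_concat: "s_mono (concat xs) = concat (rev (map s_mono xs))"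
  by (induction xs) auto

lemma mH_tens: "mH (tens x y) = Hmul x y"
  by (rule bilinear_pm_eqI[where F = "\<lambda>x y. mH (tens x y)"])
     (auto intro: bilinear_pm_compose[OF bilinear_pm_tens linear_pm_mH linear_pm_id linear_pm_id,
       simplified] bilinear_pm_Hmul)

lemma mH_tensmap: "mH (tensmap F G t) = lin (\<lambda>k. Hmul (F (basis (fst k))) (G (basis (snd k)))) t"
  by (simp add: tensmap_def linear_pm_commute_lin[OF linear_pm_mH] mH_tens case_prod_beta)

lemma sH_Hmul: "sH (Hmul x y) = Hmul (sH y) (sH x)"
  by (rule bilinear_pm_eqI[where F = "\<lambda>x y. sH (Hmul x y)" and G = "\<lambda>x y. Hmul (sH y) (sH x)"])
     (auto intro: bilinear_pm_compose[OF bilinear_pm_Hmul linear_pm_sH linear_pm_id linear_pm_id,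
         simplified]
       bilinear_pm_swap[OF bilinear_pm_compose[OF bilinear_pm_Hmul linear_pm_id linear_pm_sH
         linear_pm_sH, simplified]])

lemma mop_eq_sH_mH_sH: "mop t = sH (mH (tensmap sH sH t))"
proof (rule linear_pm_eqI[where L = mop])
  show "linear_pm mop"
    unfolding mop_def[abs_def] by (rule linear_pm_compose[OF linear_pm_mH linear_pm_flip])
  show "linear_pm (\<lambda>t. sH (mH (tensmap sH sH t)))"
    by (rule linear_pm_compose[OF linear_pm_sH linear_pm_compose[OF linear_pm_mH linear_pm_tensmap]])
  fix p show "mop (basis p) = sH (mH (tensmap sH sH (basis p)))"
    by (cases p) (simp add: mop_def)
qed

lemma tensmap_sH_sH_eq_lin: "tensmap sH sH = lin (\<lambda>k. basis (s_mono (fst k), s_mono (snd k)))"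
  by (simp add: fun_eq_iff tensmap_def split_def)

lemma tensmap_sH_sH_HHmul:
  "tensmap sH sH (HHmul x y) = HHmul (tensmap sH sH y) (tensmap sH sH x)"
  unfolding tensmap_sH_sH_eq_lin
  by (rule bilinear_pm_eqI[where F = "\<lambda>x y. lin _ (HHmul x y)"])
     (auto simp: pair_append_def
       intro: bilinear_pm_compose[OF bilinear_pm_HHmul linear_pm_lin linear_pm_id linear_pm_id,
         simplified]
       bilinear_pm_swap[OF bilinear_pm_compose[OF bilinear_pm_HHmul linear_pm_id linear_pm_lin
         linear_pm_lin, simplified]])

section \<open>The coproduct commutes with the anti-automorphism\<close>

definition Y_mono :: "nat \<Rightarrow> nat list \<Rightarrow> mono" where
  "Y_mono j w = (if 2 \<le> length w then [(j, w)] else [])"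

definition Y_coeff :: "nat \<Rightarrow> nat list \<Rightarrow> complex" where
  "Y_coeff j w = (if 2 \<le> length w \<or> w = [j] then 1 else 0)"

lemma Y_eq_smul_basis: "Y j w = smul (Y_coeff j w) (basis (Y_mono j w))"
  by (auto simp: Y_def Y_coeff_def Y_mono_def Hone_def)

lemma s_mono_Y_mono_rev: "s_mono (Y_mono j (rev w)) = Y_mono j w"
  by (simp add: Y_mono_def s_mono_def)

lemma Y_coeff_rev: "Y_coeff j (rev w) = Y_coeff j w"
  by (auto simp: Y_coeff_def)

lemma Hmul_smul_basis: "Hmul (smul c (basis a)) (smul d (basis b)) = smul (c * d) (basis (a @ b))"
  by (simp add: Hmul_smul_left Hmul_smul_right mult.commute)

lemma tens_smul_basis: "tens (smul c (basis a)) (smul d (basis b)) = smul (c * d) (basis (a, b))"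
  using linear_pm_smul[OF bilinear_pm_linear_left[OF bilinear_pm_tens], of c "basis a"]
        linear_pm_smul[OF bilinear_pm_linear_right[OF bilinear_pm_tens], of "basis a" d "basis b"]
  by (simp add: mult.commute)

lemma Hprod_smul_basis:
  "Hprod (map (\<lambda>k. smul (c k) (basis (m k))) xs)
    = smul (prod_list (map c xs)) (basis (concat (map m xs)))"
  by (induction xs) (simp_all add: Hprod_def Hone_def Hmul_smul_basis[symmetric])

definition split_coeff :: "nat \<Rightarrow> nat list list \<Rightarrow> nat list \<Rightarrow> complex" where
  "split_coeff i ws v = prod_list (map (\<lambda>(j, w). Y_coeff j w) (zip v ws)) * Y_coeff i v"

definition split_mono :: "nat list list \<Rightarrow> nat list \<Rightarrow> mono" where
  "split_mono ws v = concat (map (\<lambda>(j, w). Y_mono j w) (zip v ws))"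

lemma Delta_gen_eq_sum: "Delta_gen N (i, u) =
  (\<Sum>ws\<in>interval_splits u. \<Sum>v\<in>words N (length ws).
     smul (split_coeff i ws v) (basis (split_mono ws v, Y_mono i v)))"
proof -
  have "tens (Hprod (map (\<lambda>k. Y (v ! k) (ws ! k)) [0..<length ws])) (Y i v)
      = smul (split_coeff i ws v) (basis (split_mono ws v, Y_mono i v))"
    if "v \<in> words N (length ws)" for ws v
  proof -
    have "length v = length ws" using that by (simp add: words_def)
    then have "map (\<lambda>k. Y (v ! k) (ws ! k)) [0..<length ws] = map (\<lambda>(j, w). Y j w) (zip v ws)"
      by (intro nth_equalityI) auto
    also have "\<dots> = map (\<lambda>z. smul (case z of (j, w) \<Rightarrow> Y_coeff j w)
        (basis (case z of (j, w) \<Rightarrow> Y_mono j w))) (zip v ws)"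
      by (auto simp: Y_eq_smul_basis)
    finally show ?thesis
      by (simp add: Hprod_smul_basis Y_eq_smul_basis tens_smul_basis split_coeff_def split_mono_def)
  qed
  then show ?thesis unfolding Delta_gen_def by (auto intro!: sum.cong)
qed

lemma bij_betw_rev_interval_splits:
  "bij_betw (\<lambda>ws. rev (map rev ws)) (interval_splits u) (interval_splits (rev u))"
proof (rule bij_betw_byWitness[where f' = "\<lambda>ws. rev (map rev ws)"])
  show "(\<lambda>ws. rev (map rev ws)) ` interval_splits u \<subseteq> interval_splits (rev u)"
    by (auto simp: interval_splits_def rev_concat rev_map)
  show "(\<lambda>ws. rev (map rev ws)) ` interval_splits (rev u) \<subseteq> interval_splits u"
    by (auto simp: interval_splits_def) (metis rev_concat rev_map rev_rev_ident)
qed (simp_all add: rev_map)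

lemma bij_betw_rev_words: "bij_betw rev (words N n) (words N n)"
  by (rule bij_betw_byWitness[where f' = rev]) (auto simp: words_def)

lemma zip_rev_map_rev:
  "length v = length ws \<Longrightarrow>
    zip (rev v) (rev (map rev ws)) = rev (map (\<lambda>(j, w). (j, rev w)) (zip v ws))"
  by (simp add: zip_rev zip_map2)

lemma split_coeff_rev:
  assumes "length v = length ws"
  shows "split_coeff i (rev (map rev ws)) (rev v) = split_coeff i ws v"
  unfolding split_coeff_def zip_rev_map_rev[OF assms]
  by (simp add: rev_map[symmetric] Y_coeff_rev o_def split_def)

lemma s_mono_split_mono_rev:
  assumes "length v = length ws"
  shows "s_mono (split_mono (rev (map rev ws)) (rev v)) = split_mono ws v"
  unfolding split_mono_def zip_rev_map_rev[OF assms]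
  by (simp add: s_mono_concat rev_map[symmetric] o_def s_mono_Y_mono_rev split_def)

text \<open>Reversing the word u reverses the order of the intervals C_1 < ... < C_q and the word v.\<close>

lemma tensmap_sH_sH_Delta_gen_rev: "tensmap sH sH (Delta_gen N (i, rev u)) = Delta_gen N (i, u)"
proof -
  let ?term = "\<lambda>ws v. smul (split_coeff i ws v) (basis (s_mono (split_mono ws v), s_mono (Y_mono i v)))"
  have "tensmap sH sH (Delta_gen N (i, rev u))
      = (\<Sum>ws\<in>interval_splits (rev u). \<Sum>v\<in>words N (length ws). ?term ws v)"
    by (simp add: Delta_gen_eq_sum linear_pm_sum[OF linear_pm_tensmap]
        linear_pm_smul[OF linear_pm_tensmap])
  also have "\<dots> = (\<Sum>ws\<in>interval_splits u. \<Sum>v\<in>words N (length ws).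
      ?term (rev (map rev ws)) (rev v))"
    unfolding sum.reindex_bij_betw[OF bij_betw_rev_interval_splits, symmetric] length_rev length_map
    by (intro sum.cong refl sum.reindex_bij_betw[OF bij_betw_rev_words, symmetric])
  also have "\<dots> = (\<Sum>ws\<in>interval_splits u. \<Sum>v\<in>words N (length ws).
      smul (split_coeff i ws v) (basis (split_mono ws v, Y_mono i v)))"
    by (intro sum.cong refl)
       (simp add: words_def split_coeff_rev s_mono_split_mono_rev s_mono_Y_mono_rev)
  finally show ?thesis by (simp add: Delta_gen_eq_sum)
qed

definition Delta_mono :: "nat \<Rightarrow> mono \<Rightarrow> HH" where
  "Delta_mono N mo = foldr HHmul (map (Delta_gen N) mo) HHone"

lemma Delta_mono_Nil [simp]: "Delta_mono N [] = HHone"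
  by (simp add: Delta_mono_def)

lemma Delta_mono_Cons: "Delta_mono N (g # mo) = HHmul (Delta_gen N g) (Delta_mono N mo)"
  by (simp add: Delta_mono_def)

lemma Delta_mono_append: "Delta_mono N (a @ b) = HHmul (Delta_mono N a) (Delta_mono N b)"
  by (induction a) (simp_all add: Delta_mono_Cons HHmul_assoc)

lemma Delta_eq_lin: "Delta N = lin (Delta_mono N)"
  by (simp add: fun_eq_iff Delta_def Delta_mono_def[abs_def])

lemma tensmap_sH_sH_Delta_mono: "tensmap sH sH (Delta_mono N (s_mono mo)) = Delta_mono N mo"
proof (induction mo)
  case (Cons g mo)
  obtain i u where g: "g = (i, u)" by (cases g)
  have "Delta_mono N (s_mono (g # mo)) = HHmul (Delta_mono N (s_mono mo)) (Delta_gen N (i, rev u))"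
    by (simp add: g s_mono_Cons Delta_mono_append Delta_mono_Cons)
  then show ?case
    by (simp add: tensmap_sH_sH_HHmul tensmap_sH_sH_Delta_gen_rev Cons Delta_mono_Cons g)
qed (simp add: HHone_def)

lemma Delta_eq_sH_Delta_sH: "Delta N x = tensmap sH sH (Delta N (sH x))"
proof -
  have "Delta N (sH x) = lin (\<lambda>mo. Delta_mono N (s_mono mo)) x"
    by (simp add: Delta_eq_lin sH_def lin_lin)
  then show ?thesis
    by (simp add: linear_pm_commute_lin[OF linear_pm_tensmap] tensmap_sH_sH_Delta_mono Delta_eq_lin)
qed

section \<open>Triangularity of the coproduct\<close>

definition valid_mono :: "nat \<Rightarrow> mono \<Rightarrow> bool" where
  "valid_mono N mo \<longleftrightarrow> (\<forall>g\<in>set mo. valid_gen N g)"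

definition mono_deg :: "mono \<Rightarrow> nat" where
  "mono_deg mo = (\<Sum>g\<leftarrow>mo. length (snd g) - 1)"

lemma valid_mono_Nil [simp]: "valid_mono N []"
  by (simp add: valid_mono_def)

lemma valid_mono_Cons [simp]: "valid_mono N (g # mo) \<longleftrightarrow> valid_gen N g \<and> valid_mono N mo"
  by (simp add: valid_mono_def)

lemma valid_mono_append [simp]: "valid_mono N (a @ b) \<longleftrightarrow> valid_mono N a \<and> valid_mono N b"
  by (auto simp: valid_mono_def)

lemma valid_mono_s_mono [simp]: "valid_mono N (s_mono mo) \<longleftrightarrow> valid_mono N mo"
proof (induction mo)
  case (Cons g mo)
  then show ?case by (cases g) (auto simp: s_mono_Cons valid_gen_def)
qed simp

lemma mono_deg_Nil [simp]: "mono_deg [] = 0"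
  by (simp add: mono_deg_def)

lemma mono_deg_Cons: "mono_deg ((i, u) # mo) = (length u - 1) + mono_deg mo"
  by (simp add: mono_deg_def)

lemma mono_deg_append [simp]: "mono_deg (a @ b) = mono_deg a + mono_deg b"
  by (simp add: mono_deg_def)

lemma Hcar_iff: "x \<in> Hcar N \<longleftrightarrow> (\<forall>mo\<in>keys x. valid_mono N mo)"
  by (simp add: Hcar_def valid_mono_def)

lemma HHcar_iff: "t \<in> HHcar N \<longleftrightarrow> (\<forall>k\<in>keys t. valid_mono N (fst k) \<and> valid_mono N (snd k))"
  by (auto simp: HHcar_def valid_mono_def)

definition lower_terms :: "nat \<Rightarrow> nat \<Rightarrow> HH set" where
  "lower_terms N d = {t \<in> HHcar N. \<forall>k\<in>keys t. mono_deg (fst k) < d}"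

lemma lower_terms_iff:
  "t \<in> lower_terms N d \<longleftrightarrow>
    (\<forall>k\<in>keys t. valid_mono N (fst k) \<and> valid_mono N (snd k) \<and> mono_deg (fst k) < d)"
  by (auto simp: lower_terms_def HHcar_iff)

lemma lower_terms_zero [simp]: "0 \<in> lower_terms N d"
  by (simp add: lower_terms_iff)

lemma lower_terms_add: "s \<in> lower_terms N d \<Longrightarrow> t \<in> lower_terms N d \<Longrightarrow> s + t \<in> lower_terms N d"
  unfolding lower_terms_iff by (auto dest!: subsetD[OF keys_add])

lemma lower_terms_smul: "t \<in> lower_terms N d \<Longrightarrow> smul c t \<in> lower_terms N d"
  unfolding lower_terms_iff by (auto dest!: subsetD[OF keys_smul])

lemma lower_terms_sum: "(\<And>a. a \<in> A \<Longrightarrow> f a \<in> lower_terms N d) \<Longrightarrow> sum f A \<in> lower_terms N d"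
  by (induction A rule: infinite_finite_induct) (auto intro: lower_terms_add)

lemma lower_terms_HHmul:
  assumes "\<And>p q. p \<in> keys s \<Longrightarrow> q \<in> keys t \<Longrightarrow> valid_mono N (fst p) \<and> valid_mono N (snd p)
      \<and> valid_mono N (fst q) \<and> valid_mono N (snd q) \<and> mono_deg (fst p) + mono_deg (fst q) < d"
  shows "HHmul s t \<in> lower_terms N d"
  using keys_bilin_ext[of pair_append s t] assms
  unfolding lower_terms_iff HHmul_eq_bilin_ext by (fastforce simp: pair_append_def)

lemma length_concat_nonempty:
  "(\<forall>w\<in>set ws. w \<noteq> []) \<Longrightarrow> (\<Sum>w\<leftarrow>ws. length w - 1) + length ws = length (concat ws)"
  by (induction ws) (auto simp: Suc_le_eq)

lemma finite_interval_splits: "finite (interval_splits u)"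
proof -
  let ?W = "{w. set w \<subseteq> set u \<and> length w \<le> length u}"
  have "interval_splits u \<subseteq> {ws. set ws \<subseteq> ?W \<and> length ws \<le> length u}"
  proof
    fix ws assume ws: "ws \<in> interval_splits u"
    then have c: "concat ws = u" and ne: "\<forall>w\<in>set ws. w \<noteq> []"
      by (auto simp: interval_splits_def)
    have "length ws \<le> length u"
      using length_concat_nonempty[OF ne] unfolding c by linarith
    moreover have "w \<in> ?W" if "w \<in> set ws" for w
      using that c member_le_sum_list[of "length w" "map length ws"]
      by (auto simp: length_concat)
    ultimately show "ws \<in> {ws. set ws \<subseteq> ?W \<and> length ws \<le> length u}" by blast
  qed
  moreover have "finite {ws. set ws \<subseteq> ?W \<and> length ws \<le> length u}"
    by (intro finite_lists_length_le) simp
  ultimately show ?thesis by (rule finite_subset)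
qed

lemma mono_deg_split_mono:
  "length v = length ws \<Longrightarrow> mono_deg (split_mono ws v) = (\<Sum>w\<leftarrow>ws. length w - 1)"
proof (induction v ws rule: list_induct2)
  case (Cons j v w ws)
  then show ?case by (simp add: split_mono_def Y_mono_def mono_deg_Cons)
qed (simp add: split_mono_def)

lemma valid_mono_split_mono:
  assumes "v \<in> words N (length ws)" "set (concat ws) \<subseteq> {1..N}"
  shows "valid_mono N (split_mono ws v)"
  unfolding valid_mono_def
proof
  fix g assume "g \<in> set (split_mono ws v)"
  then obtain j w where jw: "(j, w) \<in> set (zip v ws)" "g \<in> set (Y_mono j w)"
    unfolding split_mono_def by auto
  with set_zip_leftD[OF jw(1)] set_zip_rightD[OF jw(1)] assms show "valid_gen N g"
    by (auto simp: Y_mono_def valid_gen_def words_def split: if_splits)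
qed

lemma Delta_gen_single_interval:
  assumes "i \<in> {1..N}" "2 \<le> length u"
  shows "(\<Sum>v\<in>words N 1. smul (split_coeff i [u] v) (basis (split_mono [u] v, Y_mono i v)))
    = basis ([(i, u)], [])"
proof -
  have "words N 1 = (\<lambda>j. [j]) ` {1..N}"
    by (auto simp: words_def length_Suc_conv)
  then have "(\<Sum>v\<in>words N 1. smul (split_coeff i [u] v) (basis (split_mono [u] v, Y_mono i v)))
      = (\<Sum>j\<in>{1..N}. smul (split_coeff i [u] [j]) (basis (split_mono [u] [j], Y_mono i [j])))"
    by (simp add: sum.reindex inj_on_def)
  also have "\<dots> = (\<Sum>j\<in>{1..N}. if i = j then basis ([(i, u)], []) else 0)"
    using assms(2) by (intro sum.cong refl) (auto simp: split_coeff_def Y_coeff_def split_mono_def Y_mono_def)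
  also have "\<dots> = basis ([(i, u)], [])"
    using assms(1) by simp
  finally show ?thesis .
qed

lemma split_term_lower:
  assumes "valid_gen N (i, u)" "ws \<in> interval_splits u - {[u]}" "v \<in> words N (length ws)"
  shows "basis (split_mono ws v, Y_mono i v) \<in> lower_terms N (length u - 1)"
proof -
  have c: "concat ws = u" and ne: "\<forall>w\<in>set ws. w \<noteq> []" and "ws \<noteq> [u]"
    using assms(2) by (auto simp: interval_splits_def)
  moreover have "2 \<le> length u" "i \<in> {1..N}" "set u \<subseteq> {1..N}"
    using assms(1) by (auto simp: valid_gen_def)
  ultimately have "2 \<le> length ws"
    by (cases ws rule: remdups_adj.cases) auto
  moreover have "length v = length ws"
    using assms(3) by (simp add: words_def)
  ultimately show ?thesis
    using mono_deg_split_mono length_concat_nonempty[OF ne] valid_mono_split_mono[OF assms(3)]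
      assms(3) \<open>i \<in> {1..N}\<close> \<open>set u \<subseteq> {1..N}\<close> \<open>2 \<le> length u\<close> c
    by (auto simp: lower_terms_iff Y_mono_def valid_gen_def words_def)
qed

lemma Delta_gen_triangular:
  assumes "valid_gen N (i, u)"
  shows "\<exists>R\<in>lower_terms N (length u - 1). Delta_gen N (i, u) = basis ([(i, u)], []) + R"
proof -
  define F where "F ws = (\<Sum>v\<in>words N (length ws).
      smul (split_coeff i ws v) (basis (split_mono ws v, Y_mono i v)))" for ws
  have "[u] \<in> interval_splits u"
    using assms by (auto simp: interval_splits_def valid_gen_def)
  then have "Delta_gen N (i, u) = F [u] + (\<Sum>ws\<in>interval_splits u - {[u]}. F ws)"
    unfolding Delta_gen_eq_sum F_def[symmetric] by (rule sum.remove[OF finite_interval_splits])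
  moreover have "F [u] = basis ([(i, u)], [])"
    using assms Delta_gen_single_interval by (simp add: F_def valid_gen_def)
  moreover have "(\<Sum>ws\<in>interval_splits u - {[u]}. F ws) \<in> lower_terms N (length u - 1)"
    unfolding F_def using split_term_lower[OF assms]
    by (intro lower_terms_sum lower_terms_smul)
  ultimately show ?thesis by (metis bexI)
qed

lemma Delta_mono_triangular:
  assumes "valid_mono N mo"
  shows "\<exists>R\<in>lower_terms N (mono_deg mo). Delta_mono N mo = basis (mo, []) + R"
  using assms
proof (induction mo)
  case Nil
  show ?case by (rule bexI[of _ 0]) (simp_all add: HHone_def)
next
  case (Cons g mo)
  obtain i u where g: "g = (i, u)" by (cases g)
  have vg: "valid_gen N (i, u)" and vm: "valid_mono N mo"
    using Cons.prems g by auto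
  obtain R1 where R1: "R1 \<in> lower_terms N (length u - 1)" "Delta_gen N (i, u) = basis ([(i, u)], []) + R1"
    using Delta_gen_triangular[OF vg] by blast
  obtain R2 where R2: "R2 \<in> lower_terms N (mono_deg mo)" "Delta_mono N mo = basis (mo, []) + R2"
    using Cons.IH[OF vm] by blast
  have "Delta_mono N (g # mo) = basis (g # mo, []) +
      (HHmul (basis ([(i, u)], [])) R2 + HHmul R1 (basis (mo, [])) + HHmul R1 R2)"
    by (simp add: Delta_mono_Cons g R1(2) R2(2) HHmul_add_left HHmul_add_right pair_append_def
        algebra_simps)
  moreover have "HHmul (basis ([(i, u)], [])) R2 \<in> lower_terms N (mono_deg (g # mo))"
    by (rule lower_terms_HHmul) (use R2(1) vg in \<open>auto simp: lower_terms_iff g mono_deg_Cons\<close>)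
  moreover have "HHmul R1 (basis (mo, [])) \<in> lower_terms N (mono_deg (g # mo))"
    by (rule lower_terms_HHmul) (use R1(1) vm in \<open>auto simp: lower_terms_iff g mono_deg_Cons\<close>)
  moreover have "HHmul R1 R2 \<in> lower_terms N (mono_deg (g # mo))"
    by (rule lower_terms_HHmul) (use R1(1) R2(1) in \<open>fastforce simp: lower_terms_iff g mono_deg_Cons\<close>)
  ultimately show ?case by (blast intro: lower_terms_add)
qed

section \<open>Antipodes\<close>

lemma Delta_mono_HHcar: "valid_mono N mo \<Longrightarrow> Delta_mono N mo \<in> HHcar N"
  using Delta_mono_triangular[of N mo] keys_add[of "basis (mo, [])"]
  by (fastforce simp: lower_terms_def HHcar_iff)

lemma Hcar_basis: "valid_mono N mo \<Longrightarrow> basis mo \<in> Hcar N"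
  by (simp add: Hcar_iff)

lemma Hcar_smul: "x \<in> Hcar N \<Longrightarrow> smul c x \<in> Hcar N"
  unfolding Hcar_iff by (auto dest!: subsetD[OF keys_smul])

lemma Hcar_lin: "(\<And>a. a \<in> keys x \<Longrightarrow> f a \<in> Hcar N) \<Longrightarrow> lin f x \<in> Hcar N"
  using keys_lin[of f x] by (fastforce simp: Hcar_iff)

lemma Hcar_sH: "x \<in> Hcar N \<Longrightarrow> sH x \<in> Hcar N"
  unfolding sH_def by (rule Hcar_lin) (simp add: Hcar_iff)

lemma Hcar_Hmul: "x \<in> Hcar N \<Longrightarrow> y \<in> Hcar N \<Longrightarrow> Hmul x y \<in> Hcar N"
  using keys_bilin_ext[of "(@)" x y] by (fastforce simp: Hcar_iff Hmul_eq_bilin_ext)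

lemma epsH_basis: "epsH (basis mo) = (if mo = [] then 1 else 0)"
  by (simp add: epsH_def lookup_basis)

lemma epsH_basis_append: "epsH (basis (a @ b)) = epsH (basis a) * epsH (basis b)"
  by (simp add: epsH_basis)

lemma epsH_basis_s_mono: "epsH (basis (s_mono mo)) = epsH (basis mo)"
  by (simp add: epsH_basis s_mono_def)

definition lin_ext ::
    "(('a \<Rightarrow>\<^sub>0 complex) \<Rightarrow> ('b \<Rightarrow>\<^sub>0 complex)) \<Rightarrow> ('a \<Rightarrow>\<^sub>0 complex) \<Rightarrow> ('b \<Rightarrow>\<^sub>0 complex)" where
  "lin_ext L = lin (\<lambda>a. L (basis a))"

lemma lin_ext_basis [simp]: "lin_ext L (basis a) = L (basis a)"
  by (simp add: lin_ext_def)

lemma linear_pm_lin_ext: "linear_pm (lin_ext L)"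
  by (simp add: lin_ext_def)

lemma lin_ext_eq_on_Hcar:
  assumes add: "\<And>x y. x \<in> Hcar N \<Longrightarrow> y \<in> Hcar N \<Longrightarrow> L (x + y) = L x + L y"
    and smul: "\<And>c x. x \<in> Hcar N \<Longrightarrow> L (smul c x) = smul c (L x)"
    and x: "x \<in> Hcar N"
  shows "L x = lin_ext L x"
proof -
  have L0: "L 0 = 0"
    using smul[of 0 0] by (simp add: Hcar_iff)
  have "L (\<Sum>a\<in>A. smul (lookup x a) (basis a)) = (\<Sum>a\<in>A. smul (lookup x a) (L (basis a)))"
    if "finite A" "A \<subseteq> keys x" for A
    using that
  proof (induction A rule: finite_induct)
    case (insert a A)
    have "basis a \<in> Hcar N" and "(\<Sum>a\<in>A. smul (lookup x a) (basis a)) \<in> Hcar N"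
      using insert x by (auto simp: Hcar_iff dest!: subsetD[OF keys_sum] subsetD[OF keys_smul])
    with insert show ?case
      by (simp add: add Hcar_smul smul)
  qed (simp add: L0)
  from this[OF finite_keys order_refl] show ?thesis
    using lin_basis_id[of x] by (simp add: lin_ext_def lin_def)
qed

lemma triangular_unique:
  fixes D :: "'a \<Rightarrow> ('a \<times> 'b) \<Rightarrow>\<^sub>0 complex" and d :: "'a \<Rightarrow> nat" and \<Phi> :: "'b \<Rightarrow> H"
  assumes triangular:
      "\<And>x. P x \<Longrightarrow> \<exists>R. D x = basis (x, e) + R \<and> (\<forall>k\<in>keys R. P (fst k) \<and> d (fst k) < d x)"
    and unit: "\<Phi> e = Hone"
    and eq: "\<And>x. P x \<Longrightarrow> lin (\<lambda>k. Hmul (F (fst k)) (\<Phi> (snd k))) (D x)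
                         = lin (\<lambda>k. Hmul (G (fst k)) (\<Phi> (snd k))) (D x)"
    and "P x"
  shows "F x = G x"
  using \<open>P x\<close>
proof (induction "d x" arbitrary: x rule: less_induct)
  case less
  obtain R where D: "D x = basis (x, e) + R" and R: "\<forall>k\<in>keys R. P (fst k) \<and> d (fst k) < d x"
    using triangular[OF less.prems] by blast
  have "lin (\<lambda>k. Hmul (F (fst k)) (\<Phi> (snd k))) R = lin (\<lambda>k. Hmul (G (fst k)) (\<Phi> (snd k))) R"
    by (rule lin_cong) (use R less.hyps in auto)
  with eq[OF less.prems] show ?case
    by (simp add: D lin_add unit)
qed

text \<open>Keys of \<Delta>(a) \<Delta>(b) with the two left factors kept apart, as in the coproduct of a \<otimes> b in
  H \<otimes> H followed by multiplication of the right factors.\<close>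

definition pair_key :: "mono \<times> mono \<Rightarrow> mono \<times> mono \<Rightarrow> (mono \<times> mono) \<times> mono" where
  "pair_key k k' = ((fst k, fst k'), snd k @ snd k')"

lemma pair_Delta_triangular:
  assumes "valid_mono N a" "valid_mono N b"
  shows "\<exists>R. bilin_ext pair_key (Delta_mono N a) (Delta_mono N b) = basis ((a, b), []) + R \<and>
    (\<forall>k\<in>keys R. (valid_mono N (fst (fst k)) \<and> valid_mono N (snd (fst k))) \<and>
       mono_deg (fst (fst k)) + mono_deg (snd (fst k)) < mono_deg a + mono_deg b)"
proof -
  obtain R1 where R1: "R1 \<in> lower_terms N (mono_deg a)" "Delta_mono N a = basis (a, []) + R1"
    using Delta_mono_triangular[OF assms(1)] by blast
  obtain R2 where R2: "R2 \<in> lower_terms N (mono_deg b)" "Delta_mono N b = basis (b, []) + R2"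
    using Delta_mono_triangular[OF assms(2)] by blast
  let ?P = "bilin_ext pair_key"
  have "?P (Delta_mono N a) (Delta_mono N b)
      = basis ((a, b), []) + (?P (basis (a, [])) R2 + ?P R1 (basis (b, [])) + ?P R1 R2)"
    unfolding R1(2) R2(2) bilin_ext_add_left bilin_ext_add_right by (simp add: pair_key_def add.assoc)
  moreover have "(valid_mono N (fst (fst k)) \<and> valid_mono N (snd (fst k))) \<and>
       mono_deg (fst (fst k)) + mono_deg (snd (fst k)) < mono_deg a + mono_deg b"
    if k_in: "k \<in> keys (?P (basis (a, [])) R2 + ?P R1 (basis (b, [])) + ?P R1 R2)" for k
  proof -
    have "k \<in> keys (?P (basis (a, [])) R2) \<union> keys (?P R1 (basis (b, []))) \<union> keys (?P R1 R2)"
      using k_in keys_add[of "?P (basis (a, [])) R2 + ?P R1 (basis (b, []))" "?P R1 R2"]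
        keys_add[of "?P (basis (a, [])) R2" "?P R1 (basis (b, []))"] by blast
    then obtain p q where k: "k = pair_key p q" and pq: "p \<in> keys (basis (a, [])) \<and> q \<in> keys R2 \<or>
        p \<in> keys R1 \<and> q \<in> keys (basis (b, [])) \<or> p \<in> keys R1 \<and> q \<in> keys R2"
      using keys_bilin_ext[of pair_key "basis (a, [])" R2] keys_bilin_ext[of pair_key R1 "basis (b, [])"]
        keys_bilin_ext[of pair_key R1 R2] by blast
    from pq R1(1) R2(1) assms show ?thesis
      unfolding k pair_key_def lower_terms_iff by (auto intro: add_strict_mono)
  qed
  ultimately show ?thesis by blast
qed

context
  fixes N :: nat and S :: "H \<Rightarrow> H"
  assumes antipode: "is_antipode N S"
begin

lemma antipode_Hcar: "x \<in> Hcar N \<Longrightarrow> S x \<in> Hcar N"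
  using antipode by (simp add: is_antipode_def)

text \<open>An antipode in the sense of \<^const>\<open>is_antipode\<close> is only linear on \<^const>\<open>Hcar\<close> N and
  arbitrary elsewhere, so computations go through its linear extension.\<close>

lemma antipode_eq_lin_ext: "x \<in> Hcar N \<Longrightarrow> S x = lin_ext S x"
  using antipode unfolding is_antipode_def by (intro lin_ext_eq_on_Hcar) blast+

lemma antipode_left_basis:
  assumes "valid_mono N mo"
  shows "lin (\<lambda>k. Hmul (S (basis (fst k))) (basis (snd k))) (Delta_mono N mo)
    = smul (epsH (basis mo)) Hone"
proof -
  have "mH (tensmap S id (Delta N (basis mo))) = smul (epsH (basis mo)) Hone"
    using antipode Hcar_basis[OF assms] unfolding is_antipode_def by blast
  then show ?thesis by (simp add: mH_tensmap Delta_eq_lin)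
qed

lemma antipode_right_basis:
  assumes "valid_mono N mo"
  shows "lin (\<lambda>k. Hmul (basis (fst k)) (S (basis (snd k)))) (Delta_mono N mo)
    = smul (epsH (basis mo)) Hone"
proof -
  have "mH (tensmap id S (Delta N (basis mo))) = smul (epsH (basis mo)) Hone"
    using antipode Hcar_basis[OF assms] unfolding is_antipode_def by blast
  then show ?thesis by (simp add: mH_tensmap Delta_eq_lin)
qed

lemma antipode_Hone: "S Hone = Hone"
  using antipode_left_basis[of "[]"] epsH_basis[of "[]"] by (simp add: HHone_def Hone_def[symmetric])

lemma antipode_left_pair_Delta:
  assumes "valid_mono N a" "valid_mono N b"
  shows "lin (\<lambda>k. Hmul (S (basis (fst (fst k) @ snd (fst k)))) (basis (snd k)))
      (bilin_ext pair_key (Delta_mono N a) (Delta_mono N b))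
    = smul (epsH (basis a) * epsH (basis b)) Hone"
proof -
  have "lin (\<lambda>k. Hmul (S (basis (fst (fst k) @ snd (fst k)))) (basis (snd k)))
      (bilin_ext pair_key (Delta_mono N a) (Delta_mono N b))
    = lin (\<lambda>k. Hmul (S (basis (fst k))) (basis (snd k))) (HHmul (Delta_mono N a) (Delta_mono N b))"
    by (simp add: lin_bilin_ext HHmul_eq_bilin_ext pair_key_def pair_append_def)
  also have "\<dots> = smul (epsH (basis (a @ b))) Hone"
    using antipode_left_basis[of "a @ b"] assms by (simp add: Delta_mono_append)
  finally show ?thesis by (simp add: epsH_basis_append)
qed

lemma antipode_rev_left_pair_Delta:
  assumes "valid_mono N a" "valid_mono N b"
  shows "lin (\<lambda>k. Hmul (Hmul (S (basis (snd (fst k)))) (S (basis (fst (fst k))))) (basis (snd k)))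
      (bilin_ext pair_key (Delta_mono N a) (Delta_mono N b))
    = smul (epsH (basis a) * epsH (basis b)) Hone"
proof -
  let ?L = "\<lambda>k. Hmul (S (basis (fst k))) (basis (snd k))"
  have "lin (\<lambda>k. Hmul (Hmul (S (basis (snd (fst k)))) (S (basis (fst (fst k))))) (basis (snd k)))
      (bilin_ext pair_key (Delta_mono N a) (Delta_mono N b))
    = lin (\<lambda>k. lin (\<lambda>k'. Hmul (S (basis (fst k'))) (Hmul (?L k) (basis (snd k'))))
        (Delta_mono N b)) (Delta_mono N a)"
    unfolding lin_bilin_ext pair_key_def fst_conv snd_conv
    by (simp only: Hmul_assoc Hmul_basis[symmetric])
  also have "\<dots> = lin (\<lambda>k'. lin (\<lambda>k. Hmul (S (basis (fst k'))) (Hmul (?L k) (basis (snd k'))))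
        (Delta_mono N a)) (Delta_mono N b)"
    by (rule lin_swap)
  also have "\<dots> = lin (\<lambda>k'. Hmul (S (basis (fst k'))) (Hmul (lin ?L (Delta_mono N a)) (basis (snd k'))))
      (Delta_mono N b)"
    by (intro lin_cong linear_pm_commute_lin[symmetric] linear_pm_compose[OF
          bilinear_pm_linear_right[OF bilinear_pm_Hmul] bilinear_pm_linear_left[OF bilinear_pm_Hmul]])
  also have "\<dots> = smul (epsH (basis a)) (lin ?L (Delta_mono N b))"
    by (simp add: antipode_left_basis[OF assms(1)] Hmul_smul_left Hmul_smul_right lin_fun_smul)
  finally show ?thesis
    by (simp add: antipode_left_basis[OF assms(2)])
qed

lemma antipode_append:
  assumes "valid_mono N a" "valid_mono N b"
  shows "S (basis (a @ b)) = Hmul (S (basis b)) (S (basis a))"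
proof -
  have "(\<lambda>(a, b). S (basis (a @ b))) (a, b) = (\<lambda>(a, b). Hmul (S (basis b)) (S (basis a))) (a, b)"
  proof (rule triangular_unique[where P = "\<lambda>(a, b). valid_mono N a \<and> valid_mono N b"
        and D = "\<lambda>(a, b). bilin_ext pair_key (Delta_mono N a) (Delta_mono N b)"
        and d = "\<lambda>(a, b). mono_deg a + mono_deg b" and e = "[]" and \<Phi> = basis])
    show "basis [] = Hone" by (simp add: Hone_def)
  qed (use assms pair_Delta_triangular antipode_left_pair_Delta antipode_rev_left_pair_Delta
      in \<open>auto simp: split_def\<close>)
  then show ?thesis by simp
qed

lemma antipode_Hmul:
  assumes "x \<in> Hcar N" "y \<in> Hcar N"
  shows "S (Hmul x y) = Hmul (S y) (S x)"
proof -
  have "lin_ext S (Hmul x y) = Hmul (lin_ext S y) (lin_ext S x)"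
  proof (rule bilinear_pm_eqI[where F = "\<lambda>x y. lin_ext S (Hmul x y)"])
    show "bilinear_pm (\<lambda>x y. lin_ext S (Hmul x y))"
      by (rule bilinear_pm_compose[OF bilinear_pm_Hmul linear_pm_lin_ext linear_pm_id linear_pm_id,
            simplified])
    show "bilinear_pm (\<lambda>x y. Hmul (lin_ext S y) (lin_ext S x))"
      by (rule bilinear_pm_swap[OF bilinear_pm_compose[OF bilinear_pm_Hmul linear_pm_id
            linear_pm_lin_ext linear_pm_lin_ext, simplified]])
  qed (use assms in \<open>simp add: Hcar_iff antipode_append\<close>)
  with assms show ?thesis
    by (simp add: antipode_eq_lin_ext Hcar_Hmul)
qed

lemma antipode_sH_antipode_sH_basis:
  assumes "valid_mono N mo"
  shows "S (sH (S (sH (basis mo)))) = basis mo"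
proof (rule triangular_unique[where P = "valid_mono N" and D = "Delta_mono N" and d = mono_deg
      and e = "[]" and \<Phi> = "\<lambda>mo. S (basis mo)" and F = "\<lambda>mo. S (sH (S (sH (basis mo))))"])
  show "\<exists>R. Delta_mono N mo = basis (mo, []) + R \<and>
      (\<forall>k\<in>keys R. valid_mono N (fst k) \<and> mono_deg (fst k) < mono_deg mo)" if "valid_mono N mo" for mo
    using Delta_mono_triangular[OF that] by (auto simp: lower_terms_iff)
  show "S (basis []) = Hone"
    using antipode_Hone by (simp add: Hone_def)
  fix mo assume mo: "valid_mono N mo"
  let ?L = "\<lambda>k. Hmul (S (basis (fst k))) (basis (snd k))"
  have "lin (\<lambda>k. Hmul (S (sH (S (sH (basis (fst k)))))) (S (basis (snd k)))) (Delta_mono N mo)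
      = lin (\<lambda>k. lin_ext S (sH (?L (s_mono (fst k), s_mono (snd k))))) (Delta_mono N mo)"
  proof (rule lin_cong)
    fix k assume "k \<in> keys (Delta_mono N mo)"
    then have valid: "valid_mono N (fst k)" "valid_mono N (snd k)"
      using Delta_mono_HHcar[OF mo] by (auto simp: HHcar_iff)
    then have Hcar: "S (basis (s_mono (fst k))) \<in> Hcar N"
      by (intro antipode_Hcar Hcar_basis) simp
    have "Hmul (S (sH (S (sH (basis (fst k)))))) (S (basis (snd k)))
        = S (Hmul (basis (snd k)) (sH (S (basis (s_mono (fst k))))))"
      using valid Hcar by (simp add: antipode_Hmul Hcar_basis Hcar_sH)
    also have "\<dots> = S (sH (?L (s_mono (fst k), s_mono (snd k))))"
      by (simp add: sH_Hmul)
    also have "\<dots> = lin_ext S (sH (?L (s_mono (fst k), s_mono (snd k))))"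
      using valid Hcar by (intro antipode_eq_lin_ext Hcar_sH Hcar_Hmul Hcar_basis) simp_all
    finally show "Hmul (S (sH (S (sH (basis (fst k)))))) (S (basis (snd k)))
        = lin_ext S (sH (?L (s_mono (fst k), s_mono (snd k))))" .
  qed
  also have "\<dots> = lin_ext S (sH (lin ?L (tensmap sH sH (Delta_mono N mo))))"
    unfolding tensmap_sH_sH_eq_lin lin_lin lin_basis
    by (rule linear_pm_commute_lin[symmetric, OF linear_pm_compose[OF linear_pm_lin_ext linear_pm_sH]])
  also have "\<dots> = smul (epsH (basis mo)) Hone"
    using tensmap_sH_sH_Delta_mono[of N "s_mono mo"] antipode_left_basis[of "s_mono mo"] mo antipode_Hone
    by (simp add: epsH_basis_s_mono linear_pm_smul[OF linear_pm_lin_ext] linear_pm_smul[OF linear_pm_sH]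
        Hone_def)
  also have "\<dots> = lin (\<lambda>k. Hmul (basis (fst k)) (S (basis (snd k)))) (Delta_mono N mo)"
    by (rule antipode_right_basis[OF mo, symmetric])
  finally show "lin (\<lambda>k. Hmul (S (sH (S (sH (basis (fst k)))))) (S (basis (snd k)))) (Delta_mono N mo)
      = lin (\<lambda>k. Hmul (basis (fst k)) (S (basis (snd k)))) (Delta_mono N mo)" .
qed (rule assms)

lemma antipode_sH_antipode_sH:
  assumes x: "x \<in> Hcar N"
  shows "S (sH (S (sH x))) = x"
proof -
  have S_sH_S_sH: "S (sH (S (sH y))) = lin_ext S (sH (lin_ext S (sH y)))" if "y \<in> Hcar N" for y
  proof -
    have "S (sH (S (sH y))) = lin_ext S (sH (S (sH y)))"
      using that by (intro antipode_eq_lin_ext Hcar_sH antipode_Hcar)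
    also have "\<dots> = lin_ext S (sH (lin_ext S (sH y)))"
      using antipode_eq_lin_ext[OF Hcar_sH[OF that]] by simp
    finally show ?thesis .
  qed
  have "S (sH (S (sH x))) = lin_ext S (sH (lin_ext S (sH x)))"
    using x by (rule S_sH_S_sH)
  also have "\<dots> = x"
  proof (rule linear_pm_eqI[OF _ linear_pm_id])
    show "linear_pm (\<lambda>x. lin_ext S (sH (lin_ext S (sH x))))"
      by (rule linear_pm_compose[OF linear_pm_lin_ext
            linear_pm_compose[OF linear_pm_sH linear_pm_compose[OF linear_pm_lin_ext linear_pm_sH]]])
    fix mo assume "mo \<in> keys x"
    then have "valid_mono N mo"
      using x by (simp add: Hcar_iff)
    have "lin_ext S (sH (lin_ext S (sH (basis mo)))) = S (sH (S (sH (basis mo))))"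
      using \<open>valid_mono N mo\<close> by (intro S_sH_S_sH[symmetric] Hcar_basis)
    also have "\<dots> = basis mo"
      using \<open>valid_mono N mo\<close> by (rule antipode_sH_antipode_sH_basis)
    finally show "lin_ext S (sH (lin_ext S (sH (basis mo)))) = basis mo" .
  qed
  finally show ?thesis .
qed

end

theorem lemma5:
  fixes N :: nat and S_H S_L :: "H \<Rightarrow> H"
  assumes "N \<ge> 1"
    and "is_antipode N S_H"
    and "\<forall>x\<in>Hcar N. S_L x \<in> Hcar N \<and> S_L (S_H x) = x \<and> S_H (S_L x) = x"
  shows "(\<forall>t\<in>HHcar N. mop t = sH (mH (tensmap sH sH t)))
       \<and> (\<forall>x\<in>Hcar N. Delta N x = tensmap sH sH (Delta N (sH x)))
       \<and> (\<forall>x\<in>Hcar N. S_L x = sH (S_H (sH x)))"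
proof (intro conjI ballI)
  fix t show "mop t = sH (mH (tensmap sH sH t))"
    by (rule mop_eq_sH_mH_sH)
next
  fix x show "Delta N x = tensmap sH sH (Delta N (sH x))"
    by (rule Delta_eq_sH_Delta_sH)
next
  fix x assume x: "x \<in> Hcar N"
  have "sH (S_H (sH x)) \<in> Hcar N"
    using x by (intro Hcar_sH antipode_Hcar[OF assms(2)])
  then have "S_L (S_H (sH (S_H (sH x)))) = sH (S_H (sH x))"
    using assms(3) by blast
  then show "S_L x = sH (S_H (sH x))"
    using antipode_sH_antipode_sH[OF assms(2) x] by simp
qed

end
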